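(* Let $a,b,c$ be indeterminates, and let $\{U_n(x)\}_{n\ge 0}$ be the Chebyshev polynomials of the second kind, defined by $\sum_{n=0}^{\infty} U_n(x)t^n = \frac{1}{1-2xt+t^2}$. Then, as formal power series in $t$, $$\sum_{n=0}^{\infty} U_n(a)U_n(b)U_n(c)\, t^n = \frac{N(t)}{D(t)},$$ where $$N(t)=1+(-4a^2-4b^2-4c^2+3)t^2+16abc\,t^3+(-4a^2-4b^2-4c^2+3)t^4+t^6,$$ and $$\begin{aligned}D(t)={}&t^8-8abc\,t^7+(16a^2b^2+16a^2c^2-8a^2+16b^2c^2-8b^2-8c^2+4)t^6\\ &+(-32a^3bc+40abc-32ab^3c-32abc^3)t^5\\ &+(16a^4+64a^2b^2c^2-16a^2+16b^4-16b^2+6+16c^4-16c^2)t^4\\ &+(-32a^3bc+40abc-32ab^3c-32abc^3)t^3\\ &+(16a^2b^2+16a^2c^2-8a^2+16b^2c^2-8b^2-8c^2+4)t^2-8abc\,t+1.\end{aligned}$$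
   Context: The identity is between formal power series in $t$ whose coefficients are polynomials in $a,b,c$; $U_n(x)$ is the polynomial in $x$ given as the coefficient of $t^n$ in $1/(1-2xt+t^2)$. *)

theory Defs
  imports "HOL-Computational_Algebra.Formal_Power_Series"
begin

definition chebU :: "'a::field \<Rightarrow> nat \<Rightarrow> 'a" where
  "chebU x n = fps_nth (inverse (1 - fps_const (2 * x) * fps_X + fps_X ^ 2)) n"

end

theory Submission
  imports Defs
begin

text \<open>
  Each sequence \<open>U\<^sub>n(x)\<close> satisfies \<open>U\<^sub>n\<^sub>+\<^sub>2 = 2x U\<^sub>n\<^sub>+\<^sub>1 - U\<^sub>n\<close>, and termwise products of
  linear recurrent sequences are again linear recurrent: \<open>U\<^sub>n(b) U\<^sub>n(c)\<close> satisfies a palindromic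
  recurrence of order 4, and multiplying by \<open>U\<^sub>n(a)\<close> gives one of order 8 whose coefficients are
  exactly those of \<open>D\<close>. Hence \<open>D\<close> times the generating series is a polynomial of degree
  below 8, and comparing the first eight coefficients identifies it with \<open>N\<close>.
\<close>

lemma chebU_simps:
  "chebU x 0 = 1"
  "chebU x (Suc 0) = 2 * x"
  "chebU x (Suc (Suc n)) = 2 * x * chebU x (Suc n) - chebU x n"
proof -
  define P :: "'a fps" where "P = 1 - fps_const (2 * x) * fps_X + fps_X ^ 2"
  have "Abs_fps (chebU x) = inverse P"
    unfolding chebU_def[abs_def] P_def by (rule fps_nth_inverse)
  moreover have "P * inverse P = 1"
    by (rule inverse_mult_eq_1') (simp add: P_def)
  ultimately have "fps_nth (P * Abs_fps (chebU x)) k = fps_nth 1 k" for k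
    by simp
  from this[of 0] this[of 1] this[of "Suc (Suc n)"]
  show "chebU x 0 = 1" "chebU x (Suc 0) = 2 * x"
    "chebU x (Suc (Suc n)) = 2 * x * chebU x (Suc n) - chebU x n"
    by (simp_all add: P_def algebra_simps fps_X_power_mult_nth fps_X_power_mult_right_nth)
qed

lemma chebU_add_2: "chebU x (n + 2) = 2 * x * chebU x (n + 1) - chebU x n"
  by (simp add: chebU_simps)

lemma recurrence_2_times_recurrence_2:
  fixes v w :: "nat \<Rightarrow> 'a::idom"
  assumes v: "\<And>n. v (n + 2) = 2 * b * v (n + 1) - v n"
    and w: "\<And>n. w (n + 2) = 2 * c * w (n + 1) - w n"
  shows "v (n + 4) * w (n + 4) = 4*b*c * (v (n + 3) * w (n + 3))
    - (4*b^2 + 4*c^2 - 2) * (v (n + 2) * w (n + 2)) + 4*b*c * (v (n + 1) * w (n + 1)) - v n * w n"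
proof -
  \<comment> \<open>Rewriting \<open>n + k\<close> to \<open>Suc\<^sup>k n\<close> lets the recurrences reduce every term to the initial
    values at \<open>n\<close> and \<open>Suc n\<close>, leaving a polynomial identity.\<close>
  have v': "v (Suc (Suc k)) = 2 * b * v (Suc k) - v k" for k
    using v[of k] by (simp add: numeral_2_eq_2)
  have w': "w (Suc (Suc k)) = 2 * c * w (Suc k) - w k" for k
    using w[of k] by (simp add: numeral_2_eq_2)
  show ?thesis
    by (simp only: numeral_eq_Suc pred_numeral_simps BitM.simps One_nat_def add_Suc_right add_0_right
        v' w' power_Suc power_0 mult_1_right) algebra
qed

text \<open>
  With \<open>2a = \<alpha> + \<alpha>\<inverse>\<close>, the characteristic roots of the product are \<open>\<alpha>\<^sup>\<plusminus>\<^sup>1\<close> times the four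
  roots of \<open>G\<close> (which are closed under inversion); the coefficients below are their
  elementary symmetric functions.
\<close>
lemma recurrence_2_times_palindromic_recurrence_4:
  fixes u G :: "nat \<Rightarrow> 'a::idom"
  assumes u: "\<And>n. u (n + 2) = 2 * a * u (n + 1) - u n"
    and G: "\<And>n. G (n + 4) = p * G (n + 3) - q * G (n + 2) + p * G (n + 1) - G n"
  shows "u (n + 8) * G (n + 8) - (2*a*p) * (u (n + 7) * G (n + 7))
    + (4*a^2*q + p^2 - 2*q) * (u (n + 6) * G (n + 6))
    - (8*a^3*p + 2*a*p*q - 6*a*p) * (u (n + 5) * G (n + 5))
    + (16*a^4 + 4*a^2*p^2 - 16*a^2 - 2*p^2 + q^2 + 2) * (u (n + 4) * G (n + 4))
    - (8*a^3*p + 2*a*p*q - 6*a*p) * (u (n + 3) * G (n + 3))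
    + (4*a^2*q + p^2 - 2*q) * (u (n + 2) * G (n + 2))
    - (2*a*p) * (u (n + 1) * G (n + 1)) + u n * G n = 0"
proof -
  have u': "u (Suc (Suc k)) = 2 * a * u (Suc k) - u k" for k
    using u[of k] by (simp add: numeral_2_eq_2)
  have G': "G (Suc (Suc (Suc (Suc k)))) =
      p * G (Suc (Suc (Suc k))) - q * G (Suc (Suc k)) + p * G (Suc k) - G k" for k
    using G[of k] by (simp add: eval_nat_numeral)
  show ?thesis
    by (simp only: numeral_eq_Suc pred_numeral_simps BitM.simps One_nat_def add_Suc_right add_0_right
        u' G' power_Suc power_0 mult_1_right) algebra
qed

lemma Abs_fps_mult_nth_eq_0:
  fixes Q :: "'a::comm_ring_1 fps"
  assumes deg: "\<And>i. d < i \<Longrightarrow> fps_nth Q i = 0"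
    and annihilates: "(\<Sum>i\<le>d. fps_nth Q i * f (n - i)) = 0"
    and "d \<le> n"
  shows "fps_nth (Abs_fps f * Q) n = 0"
proof -
  have "fps_nth (Abs_fps f * Q) n = (\<Sum>i = 0..n. fps_nth Q i * f (n - i))"
    by (simp add: mult.commute[of "Abs_fps f"] fps_mult_nth)
  also have "\<dots> = (\<Sum>i\<le>d. fps_nth Q i * f (n - i))"
    by (rule sum.mono_neutral_right) (use deg \<open>d \<le> n\<close> in auto)
  finally show ?thesis
    using annihilates by simp
qed

lemma fps_nth_mult_const_X_power:
  fixes f :: "'a::comm_ring_1 fps"
  shows "fps_nth (f * (fps_const c * fps_X ^ k)) n = (if n < k then 0 else c * fps_nth f (n - k))"
    and "fps_nth (f * (fps_const c * fps_X)) n = (if n < 1 then 0 else c * fps_nth f (n - 1))"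
proof -
  show *: "fps_nth (f * (fps_const c * fps_X ^ k)) n = (if n < k then 0 else c * fps_nth f (n - k))"
    for k
    by (simp add: mult.left_commute[of f] fps_X_power_mult_right_nth)
  show "fps_nth (f * (fps_const c * fps_X)) n = (if n < 1 then 0 else c * fps_nth f (n - 1))"
    using *[of 1] by simp
qed

definition chebU3_numer :: "'a::field \<Rightarrow> 'a \<Rightarrow> 'a \<Rightarrow> 'a fps" where
  "chebU3_numer a b c = 1 + fps_const (-4*a^2 - 4*b^2 - 4*c^2 + 3) * fps_X^2
       + fps_const (16*a*b*c) * fps_X^3
       + fps_const (-4*a^2 - 4*b^2 - 4*c^2 + 3) * fps_X^4 + fps_X^6"

definition chebU3_denom :: "'a::field \<Rightarrow> 'a \<Rightarrow> 'a \<Rightarrow> 'a fps" where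
  "chebU3_denom a b c = fps_X^8 - fps_const (8*a*b*c) * fps_X^7
       + fps_const (16*a^2*b^2 + 16*a^2*c^2 - 8*a^2 + 16*b^2*c^2 - 8*b^2 - 8*c^2 + 4) * fps_X^6
       + fps_const (-32*a^3*b*c + 40*a*b*c - 32*a*b^3*c - 32*a*b*c^3) * fps_X^5
       + fps_const (16*a^4 + 64*a^2*b^2*c^2 - 16*a^2 + 16*b^4 - 16*b^2 + 6 + 16*c^4 - 16*c^2) * fps_X^4
       + fps_const (-32*a^3*b*c + 40*a*b*c - 32*a*b^3*c - 32*a*b*c^3) * fps_X^3
       + fps_const (16*a^2*b^2 + 16*a^2*c^2 - 8*a^2 + 16*b^2*c^2 - 8*b^2 - 8*c^2 + 4) * fps_X^2
       - fps_const (8*a*b*c) * fps_X + 1"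

lemma chebU3_denom_annihilates:
  fixes a b c :: "'a::field"
  defines "F \<equiv> \<lambda>k. chebU a k * chebU b k * chebU c k"
  shows "(\<Sum>i\<le>8. fps_nth (chebU3_denom a b c) i * F (n + 8 - i)) = 0"
proof -
  have bc: "chebU b (k + 4) * chebU c (k + 4) =
      4*b*c * (chebU b (k + 3) * chebU c (k + 3))
      - (4*b^2 + 4*c^2 - 2) * (chebU b (k + 2) * chebU c (k + 2))
      + 4*b*c * (chebU b (k + 1) * chebU c (k + 1)) - chebU b k * chebU c k" for k
    by (rule recurrence_2_times_recurrence_2) (rule chebU_add_2)+
  have "(\<Sum>i\<le>8. fps_nth (chebU3_denom a b c) i * F (n + 8 - i)) =
      F (n + 8) - (8*a*b*c) * F (n + 7)
      + (16*a^2*b^2 + 16*a^2*c^2 - 8*a^2 + 16*b^2*c^2 - 8*b^2 - 8*c^2 + 4) * F (n + 6)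
      + (-32*a^3*b*c + 40*a*b*c - 32*a*b^3*c - 32*a*b*c^3) * F (n + 5)
      + (16*a^4 + 64*a^2*b^2*c^2 - 16*a^2 + 16*b^4 - 16*b^2 + 6 + 16*c^4 - 16*c^2) * F (n + 4)
      + (-32*a^3*b*c + 40*a*b*c - 32*a*b^3*c - 32*a*b*c^3) * F (n + 3)
      + (16*a^2*b^2 + 16*a^2*c^2 - 8*a^2 + 16*b^2*c^2 - 8*b^2 - 8*c^2 + 4) * F (n + 2)
      - (8*a*b*c) * F (n + 1) + F n"
    by (simp add: chebU3_denom_def numeral_eq_Suc atMost_Suc)
  also have "\<dots> = 0"
    using recurrence_2_times_palindromic_recurrence_4[OF chebU_add_2[of a] bc, of n]
    unfolding F_def by algebra
  finally show ?thesis .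
qed

lemma chebU3_gf_times_denom:
  "Abs_fps (\<lambda>n. chebU a n * chebU b n * chebU c n) * chebU3_denom a b c = chebU3_numer a b c"
proof (rule fps_ext)
  fix n
  show "fps_nth (Abs_fps (\<lambda>n. chebU a n * chebU b n * chebU c n) * chebU3_denom a b c) n =
      fps_nth (chebU3_numer a b c) n"
  proof (cases "n < 8")
    case True
    then consider "n = 0" | "n = 1" | "n = 2" | "n = 3" | "n = 4" | "n = 5" | "n = 6" | "n = 7"
      by linarith
    then show ?thesis
      unfolding chebU3_denom_def chebU3_numer_def
      by cases (erule ssubst; simp only: distrib_left right_diff_distrib mult_1_right
          fps_add_nth fps_sub_nth fps_nth_mult_const_X_power fps_X_power_mult_right_nth fps_nth_Abs_fps;
        simp add: eval_nat_numeral chebU_simps; algebra)+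
  next
    case False
    then obtain m where n: "n = m + 8"
      by (metis add.commute le_Suc_ex not_less)
    have "fps_nth (Abs_fps (\<lambda>n. chebU a n * chebU b n * chebU c n) * chebU3_denom a b c) n = 0"
      by (rule Abs_fps_mult_nth_eq_0[where d = 8])
        (use chebU3_denom_annihilates[of a b c m] n in \<open>auto simp: chebU3_denom_def\<close>)
    moreover have "fps_nth (chebU3_numer a b c) n = 0"
      by (simp add: chebU3_numer_def n)
    ultimately show ?thesis
      by simp
  qed
qed

theorem mainTheorem1:
  fixes a b c :: "'a::field"
  shows "Abs_fps (\<lambda>n. chebU a n * chebU b n * chebU c n) =
    (1 + fps_const (-4*a^2 - 4*b^2 - 4*c^2 + 3) * fps_X^2
       + fps_const (16*a*b*c) * fps_X^3
       + fps_const (-4*a^2 - 4*b^2 - 4*c^2 + 3) * fps_X^4 + fps_X^6)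
    / (fps_X^8 - fps_const (8*a*b*c) * fps_X^7
       + fps_const (16*a^2*b^2 + 16*a^2*c^2 - 8*a^2 + 16*b^2*c^2 - 8*b^2 - 8*c^2 + 4) * fps_X^6
       + fps_const (-32*a^3*b*c + 40*a*b*c - 32*a*b^3*c - 32*a*b*c^3) * fps_X^5
       + fps_const (16*a^4 + 64*a^2*b^2*c^2 - 16*a^2 + 16*b^4 - 16*b^2 + 6 + 16*c^4 - 16*c^2) * fps_X^4
       + fps_const (-32*a^3*b*c + 40*a*b*c - 32*a*b^3*c - 32*a*b*c^3) * fps_X^3
       + fps_const (16*a^2*b^2 + 16*a^2*c^2 - 8*a^2 + 16*b^2*c^2 - 8*b^2 - 8*c^2 + 4) * fps_X^2
       - fps_const (8*a*b*c) * fps_X + 1)"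
proof -
  have "fps_nth (chebU3_denom a b c) 0 = 1"
    by (simp add: chebU3_denom_def)
  then have "chebU3_denom a b c \<noteq> 0"
    by auto
  then have "chebU3_numer a b c / chebU3_denom a b c = Abs_fps (\<lambda>n. chebU a n * chebU b n * chebU c n)"
    by (simp add: chebU3_gf_times_denom[symmetric])
  then show ?thesis
    by (simp add: chebU3_numer_def chebU3_denom_def)
qed

end
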